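(* Fix $\rho\in\Gamma$. Suppose that $(Y^{(1)},\nu^{(1)}_{ij},\mu^{(1)}_{ij},\nu^{(1)}_{i0},\mu^{(1)}_{0i})$ and $(Y^{(2)},\nu^{(2)}_{ij},\mu^{(2)}_{ij},\nu^{(2)}_{i0},\mu^{(2)}_{0i})$ (with $Y^{(k)}=Y^{(k)\prime}>0$, all constants positive, $j\in S^\varphi_i$, $i=1,\dots,N$, $\nu_{i0}$ defined for $i$ with $d_i=1$ and $\mu_{0i}$ for $i$ with $\bar d_i=1$) both satisfy $\Upsilon_i<0$ for all $i=1,\dots,N$. For $\gamma\in[0,1]$ define $Y_\gamma=\gamma Y^{(1)}+(1-\gamma)Y^{(2)}$, $\nu_{ij,\gamma}=[\gamma(\nu^{(1)}_{ij})^{-1}+(1-\gamma)(\nu^{(2)}_{ij})^{-1}]^{-1}$, $\mu_{ij,\gamma}=[\gamma(\mu^{(1)}_{ij})^{-1}+(1-\gamma)(\mu^{(2)}_{ij})^{-1}]^{-1}$, and similarly $\nu_{i0,\gamma}$ (for $d_i=1$) and $\mu_{0i,\gamma}$ (for $\bar d_i=1$). Then $(Y_\gamma,\nu_{ij,\gamma},\mu_{ij,\gamma},\nu_{i0,\gamma},\mu_{0i,\gamma})$ also satisfies $\Upsilon_i<0$ for all $i=1,\dots,N$.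
   Context: Graphs: node set $\mathcal{V}=\{0,\dots,N\}$, followers $\mathcal{V}_0=\{1,\dots,N\}$; directed interconnection graph with edge set $\mathcal{E}^\varphi$ ($(j,i)$ = edge from $j$ to $i$). For $i\in\mathcal{V}_0$: $S^\varphi_i=\{j\in\mathcal{V}_0:(j,i)\in\mathcal{E}^\varphi\}$; $d_i=1$ if $(0,i)\in\mathcal{E}^\varphi$ else $0$; $\bar d_i=1$ if $(i,0)\in\mathcal{E}^\varphi$ else $0$. Data: $\Gamma=[\rho_{\min},\rho_{\max}]$, continuous $A:\Gamma\to\mathbb{R}^{n\times n}$, $B_1\in\mathbb{R}^{n\times p}$, $B_2\in\mathbb{R}^{n\times m}$, matrices $C_{ij}\in\mathbb{R}^{q_{ij}\times n}$ for $(j,i)\in\mathcal{E}^\varphi$, $R=R'>0$, and a fixed matrix $\bar Q=\bar Q'>0$ (in the paper $\bar Q=(\sigma^2/\hat\lambda)Q$ for a weighting matrix $Q>0$ and graph-dependent positive constants $\sigma,\hat\lambda$). For $i\in\mathcal{V}_0$: $\hat C_i$ stacks $C_{ij}$ over $j\in S^\varphi_i$ and $\Phi_i=\mathrm{diag}[\nu_{ij}^{-1}I,\ j\in S^\varphi_i]$; $\bar C_i$ stacks $C_{ri}$ over $r\in\mathcal{V}_0$ with $i\in S^\varphi_r$, and $\Omega_i=\mathrm{diag}[\mu_{ri}^{-1}I]$ over the same $r$. Define $Z_i=A(\rho)Y+YA(\rho)'-B_1R^{-1}B_1'+\big(\sum_{j\in S^\varphi_i}(\nu_{ij}^{-1}+\mu_{ij}^{-1})+d_i\nu_{i0}^{-1}+\sum_{k\in\mathcal{V}_0:\bar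 d_k=1}\mu_{0k}^{-1}\big)B_2B_2'$ (the $\nu_{i0}$ term absent if $d_i=0$), and $$\Upsilon_i=\begin{bmatrix}Z_i & Y\bar Q^{1/2} & Y\hat C_i' & Y\bar C_i' & YC_{i0}' & YC_{0i}'\\ \bar Q^{1/2}Y & -I & 0&0&0&0\\ \hat C_iY&0&-\Phi_i&0&0&0\\ \bar C_iY&0&0&-\Omega_i&0&0\\ C_{i0}Y&0&0&0&-\nu_{i0}^{-1}I&0\\ C_{0i}Y&0&0&0&0&-(N\mu_{0i})^{-1}I\end{bmatrix},$$ where the block row/column with $C_{i0}$ is present only if $d_i=1$ and the one with $C_{0i}$ only if $\bar d_i=1$. *)

theory Defs
  imports Complex_Main "Jordan_Normal_Form.Gauss_Jordan_Elimination"
begin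

definition neg_def_mat :: "real mat \<Rightarrow> bool" where
  "neg_def_mat M \<longleftrightarrow> M \<in> carrier_mat (dim_row M) (dim_row M) \<and> transpose_mat M = M \<and>
     (\<forall>v \<in> carrier_vec (dim_row M). v \<noteq> 0\<^sub>v (dim_row M) \<longrightarrow> v \<bullet> (M *\<^sub>v v) < 0)"

definition pos_def_mat :: "real mat \<Rightarrow> bool" where
  "pos_def_mat M \<longleftrightarrow> M \<in> carrier_mat (dim_row M) (dim_row M) \<and> transpose_mat M = M \<and>
     (\<forall>v \<in> carrier_vec (dim_row M). v \<noteq> 0\<^sub>v (dim_row M) \<longrightarrow> v \<bullet> (M *\<^sub>v v) > 0)"

(* Graph notions. Nodes 0..N, followers 1..N; (j,i) \<in> E is the edge from j to i. *)
definition Sphi :: "(nat \<times> nat) set \<Rightarrow> nat \<Rightarrow> nat \<Rightarrow> nat set" where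
  "Sphi E N i = {j \<in> {1..N}. (j, i) \<in> E}"

definition Sbar :: "(nat \<times> nat) set \<Rightarrow> nat \<Rightarrow> nat \<Rightarrow> nat set" where
  "Sbar E N i = {r \<in> {1..N}. i \<in> Sphi E N r}"

definition dd :: "(nat \<times> nat) set \<Rightarrow> nat \<Rightarrow> bool" where
  "dd E i \<longleftrightarrow> (0, i) \<in> E"

definition ddbar :: "(nat \<times> nat) set \<Rightarrow> nat \<Rightarrow> bool" where
  "ddbar E i \<longleftrightarrow> (i, 0) \<in> E"

definition vstack :: "nat \<Rightarrow> real mat list \<Rightarrow> real mat" where
  "vstack n Ms = foldr (\<lambda>A B. A @\<^sub>r B) Ms (0\<^sub>m 0 n)"

definition minv :: "real mat \<Rightarrow> real mat" where
  "minv R = the (mat_inverse R)"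

definition Chat where
  "Chat E N n C i = vstack n (map (\<lambda>j. C i j) (sorted_list_of_set (Sphi E N i)))"
definition Phi where
  "Phi E N C (\<nu>::nat\<Rightarrow>nat\<Rightarrow>real) i = diag_block_mat
     (map (\<lambda>j. (1 / \<nu> i j) \<cdot>\<^sub>m 1\<^sub>m (dim_row (C i j))) (sorted_list_of_set (Sphi E N i)))"
definition Cbar where
  "Cbar E N n C i = vstack n (map (\<lambda>r. C r i) (sorted_list_of_set (Sbar E N i)))"
definition Omega where
  "Omega E N C (\<mu>::nat\<Rightarrow>nat\<Rightarrow>real) i = diag_block_mat
     (map (\<lambda>r. (1 / \<mu> r i) \<cdot>\<^sub>m 1\<^sub>m (dim_row (C r i))) (sorted_list_of_set (Sbar E N i)))"

definition Zmat where
  "Zmat E N (Arho::real mat) B1 B2 R (\<nu>::nat\<Rightarrow>nat\<Rightarrow>real) \<mu> Y i =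
     Arho * Y + Y * transpose_mat Arho - B1 * minv R * transpose_mat B1
     + ((\<Sum>j\<in>Sphi E N i. 1 / \<nu> i j + 1 / \<mu> i j)
        + (if dd E i then 1 / \<nu> i 0 else 0)
        + (\<Sum>k\<in>{k \<in> {1..N}. ddbar E k}. 1 / \<mu> 0 k)) \<cdot>\<^sub>m (B2 * transpose_mat B2)"

(* Writing K_i for the vertical stack of
   Qh (= \<bar>Q^{1/2}), \<hat>C_i, \<bar>C_i, C_i0 (if d_i), C_0i (if \<bar>d_i), the first block column below Z_i is K_i Y,
   the first block row to the right of Z_i is Y K_i' (= [Y \<bar>Q^{1/2}, Y \<hat>C_i', ...] since \<bar>Q^{1/2} is symmetric),
   and the remaining lower-right part is block diagonal. *)
definition Upsilon where
  "Upsilon E N n Arho B1 B2 R Qh C Y (\<nu>::nat\<Rightarrow>nat\<Rightarrow>real) \<mu> i =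
    (let K = vstack n ([Qh, Chat E N n C i, Cbar E N n C i]
                       @ (if dd E i then [C i 0] else [])
                       @ (if ddbar E i then [C 0 i] else []));
         D = diag_block_mat ([- 1\<^sub>m (dim_row Qh), - Phi E N C \<nu> i, - Omega E N C \<mu> i]
                       @ (if dd E i then [- ((1 / \<nu> i 0) \<cdot>\<^sub>m 1\<^sub>m (dim_row (C i 0)))] else [])
                       @ (if ddbar E i then [- ((1 / (real N * \<mu> 0 i)) \<cdot>\<^sub>m 1\<^sub>m (dim_row (C 0 i)))] else []))
     in four_block_mat (Zmat E N Arho B1 B2 R \<nu> \<mu> Y i) (Y * transpose_mat K) (K * Y) D)"

definition hcomb :: "real \<Rightarrow> real \<Rightarrow> real \<Rightarrow> real" where
  "hcomb \<gamma> a b = 1 / (\<gamma> / a + (1 - \<gamma>) / b)"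

end

theory Submission
  imports Defs
begin

text \<open>Every block of \<open>\<Upsilon>\<^sub>i\<close> is affine in the unknowns \<open>Y\<close>, \<open>\<nu>\<^sup>-\<^sup>1\<close> and \<open>\<mu>\<^sup>-\<^sup>1\<close>, and the
  harmonic combinations \<open>\<nu>\<^sub>\<gamma>\<close>, \<open>\<mu>\<^sub>\<gamma>\<close> are exactly those whose reciprocals are the convex
  combinations of the given reciprocals. Hence \<open>\<Upsilon>\<^sub>i\<close> at the \<open>\<gamma>\<close>-combined data equals
  \<open>\<gamma> \<Upsilon>\<^sub>i\<^sup>(\<^sup>1\<^sup>) + (1 - \<gamma>) \<Upsilon>\<^sub>i\<^sup>(\<^sup>2\<^sup>)\<close>, and a convex combination of negative definite
  matrices is negative definite.\<close>

text \<open>Stated entrywise together with the shapes: the equation \<open>M = g \<cdot>\<^sub>m M1 + (1 - g) \<cdot>\<^sub>m M2\<close>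
  alone would not force \<open>M1\<close> to have the shape of \<open>M\<close>.\<close>

definition mat_comb :: "real \<Rightarrow> real mat \<Rightarrow> real mat \<Rightarrow> real mat \<Rightarrow> bool" where
  "mat_comb g M M1 M2 \<longleftrightarrow>
     M1 \<in> carrier_mat (dim_row M) (dim_col M) \<and> M2 \<in> carrier_mat (dim_row M) (dim_col M) \<and>
     (\<forall>i < dim_row M. \<forall>j < dim_col M. M $$ (i, j) = g * M1 $$ (i, j) + (1 - g) * M2 $$ (i, j))"

lemma mat_comb_iff:
  "mat_comb g M M1 M2 \<longleftrightarrow>
     M1 \<in> carrier_mat (dim_row M) (dim_col M) \<and> M2 \<in> carrier_mat (dim_row M) (dim_col M) \<and>
     M = g \<cdot>\<^sub>m M1 + (1 - g) \<cdot>\<^sub>m M2"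
proof
  assume "mat_comb g M M1 M2"
  then show "M1 \<in> carrier_mat (dim_row M) (dim_col M) \<and> M2 \<in> carrier_mat (dim_row M) (dim_col M) \<and>
     M = g \<cdot>\<^sub>m M1 + (1 - g) \<cdot>\<^sub>m M2"
    unfolding mat_comb_def by (auto intro!: eq_matI)
next
  assume "M1 \<in> carrier_mat (dim_row M) (dim_col M) \<and> M2 \<in> carrier_mat (dim_row M) (dim_col M) \<and>
     M = g \<cdot>\<^sub>m M1 + (1 - g) \<cdot>\<^sub>m M2"
  then show "mat_comb g M M1 M2"
    unfolding mat_comb_def by (metis carrier_matD index_add_mat(1) index_smult_mat(1) index_add_mat(2,3) index_smult_mat(2,3))
qed

lemma mat_combI:
  assumes "M1 \<in> carrier_mat (dim_row M) (dim_col M)" "M2 \<in> carrier_mat (dim_row M) (dim_col M)"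
    and "\<And>i j. i < dim_row M \<Longrightarrow> j < dim_col M \<Longrightarrow> M $$ (i, j) = g * M1 $$ (i, j) + (1 - g) * M2 $$ (i, j)"
  shows "mat_comb g M M1 M2"
  using assms unfolding mat_comb_def by blast

lemma mat_comb_carrier:
  "mat_comb g M M1 M2 \<Longrightarrow> M1 \<in> carrier_mat (dim_row M) (dim_col M) \<and> M2 \<in> carrier_mat (dim_row M) (dim_col M)"
  unfolding mat_comb_def by blast

lemma mat_comb_index:
  "mat_comb g M M1 M2 \<Longrightarrow> i < dim_row M \<Longrightarrow> j < dim_col M \<Longrightarrow> M $$ (i, j) = g * M1 $$ (i, j) + (1 - g) * M2 $$ (i, j)"
  unfolding mat_comb_def by blast

lemma mat_comb_refl: "mat_comb g M M M"
  by (rule mat_combI) (simp_all add: algebra_simps)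

lemma mat_comb_uminus:
  assumes "mat_comb g M M1 M2"
  shows "mat_comb g (- M) (- M1) (- M2)"
  using mat_comb_carrier[OF assms]
  by (intro mat_combI) (auto simp: mat_comb_index[OF assms] algebra_simps)

lemma mat_comb_add:
  assumes "mat_comb g A A1 A2" "mat_comb g B B1 B2" "B \<in> carrier_mat (dim_row A) (dim_col A)"
  shows "mat_comb g (A + B) (A1 + B1) (A2 + B2)"
  using mat_comb_carrier[OF assms(1)] mat_comb_carrier[OF assms(2)] assms(3)
  by (intro mat_combI) (auto simp: mat_comb_index[OF assms(1)] mat_comb_index[OF assms(2)] algebra_simps)

lemma mat_comb_minus:
  assumes "mat_comb g A A1 A2" "mat_comb g B B1 B2" "B \<in> carrier_mat (dim_row A) (dim_col A)"
  shows "mat_comb g (A - B) (A1 - B1) (A2 - B2)"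
  using mat_comb_carrier[OF assms(1)] mat_comb_carrier[OF assms(2)] assms(3)
  by (intro mat_combI) (auto simp: mat_comb_index[OF assms(1)] mat_comb_index[OF assms(2)] algebra_simps)

lemma mat_comb_smult_mat:
  assumes "s = g * s1 + (1 - g) * s2"
  shows "mat_comb g (s \<cdot>\<^sub>m M) (s1 \<cdot>\<^sub>m M) (s2 \<cdot>\<^sub>m M)"
  by (intro mat_combI) (simp_all add: assms distrib_right)

lemma mat_comb_mult_left:
  assumes "mat_comb g Y Y1 Y2" "K \<in> carrier_mat nr (dim_row Y)"
  shows "mat_comb g (K * Y) (K * Y1) (K * Y2)"
proof -
  have Y1: "Y1 \<in> carrier_mat (dim_row Y) (dim_col Y)" and Y2: "Y2 \<in> carrier_mat (dim_row Y) (dim_col Y)"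
    and Y: "Y = g \<cdot>\<^sub>m Y1 + (1 - g) \<cdot>\<^sub>m Y2"
    using assms(1) unfolding mat_comb_iff by blast+
  have "K * Y = K * (g \<cdot>\<^sub>m Y1) + K * ((1 - g) \<cdot>\<^sub>m Y2)"
    unfolding Y using assms(2) Y1 Y2 by (intro mult_add_distrib_mat) auto
  also have "\<dots> = g \<cdot>\<^sub>m (K * Y1) + (1 - g) \<cdot>\<^sub>m (K * Y2)"
    using assms(2) Y1 Y2 by (simp only: mult_smult_distrib)
  finally show ?thesis
    unfolding mat_comb_iff using assms(2) Y1 Y2 by simp
qed

lemma mat_comb_mult_right:
  assumes "mat_comb g Y Y1 Y2" "K \<in> carrier_mat (dim_col Y) nc"
  shows "mat_comb g (Y * K) (Y1 * K) (Y2 * K)"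
proof -
  have Y1: "Y1 \<in> carrier_mat (dim_row Y) (dim_col Y)" and Y2: "Y2 \<in> carrier_mat (dim_row Y) (dim_col Y)"
    and Y: "Y = g \<cdot>\<^sub>m Y1 + (1 - g) \<cdot>\<^sub>m Y2"
    using assms(1) unfolding mat_comb_iff by blast+
  have "Y * K = (g \<cdot>\<^sub>m Y1) * K + ((1 - g) \<cdot>\<^sub>m Y2) * K"
    unfolding Y using assms(2) Y1 Y2 by (intro add_mult_distrib_mat) auto
  also have "\<dots> = g \<cdot>\<^sub>m (Y1 * K) + (1 - g) \<cdot>\<^sub>m (Y2 * K)"
    using assms(2) Y1 Y2 by (simp only: mult_smult_assoc_mat)
  finally show ?thesis
    unfolding mat_comb_iff using assms(2) Y1 Y2 by simp
qed

lemma mat_comb_four_block_mat: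
  assumes "mat_comb g A A1 A2" "mat_comb g B B1 B2" "mat_comb g C C1 C2" "mat_comb g D D1 D2"
    "dim_row B = dim_row A" "dim_col B = dim_col D" "dim_row C = dim_row D" "dim_col C = dim_col A"
  shows "mat_comb g (four_block_mat A B C D) (four_block_mat A1 B1 C1 D1) (four_block_mat A2 B2 C2 D2)"
  using assms unfolding mat_comb_def by auto

lemma mat_comb_diag_block_mat_Cons:
  assumes "mat_comb g A A1 A2" "mat_comb g (diag_block_mat As) (diag_block_mat As1) (diag_block_mat As2)"
  shows "mat_comb g (diag_block_mat (A # As)) (diag_block_mat (A1 # As1)) (diag_block_mat (A2 # As2))"
proof -
  have dims: "dim_row A1 = dim_row A" "dim_col A1 = dim_col A" "dim_row A2 = dim_row A" "dim_col A2 = dim_col A"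
    "dim_row (diag_block_mat As1) = dim_row (diag_block_mat As)"
    "dim_col (diag_block_mat As1) = dim_col (diag_block_mat As)"
    "dim_row (diag_block_mat As2) = dim_row (diag_block_mat As)"
    "dim_col (diag_block_mat As2) = dim_col (diag_block_mat As)"
    using mat_comb_carrier[OF assms(1)] mat_comb_carrier[OF assms(2)] by auto
  show ?thesis
    unfolding diag_block_mat.simps Let_def dims
    by (rule mat_comb_four_block_mat[OF assms(1) mat_comb_refl mat_comb_refl assms(2)]) simp_all
qed

lemma mat_comb_diag_block_mat_map:
  assumes "\<forall>x \<in> set xs. mat_comb g (f x) (f1 x) (f2 x)"
  shows "mat_comb g (diag_block_mat (map f xs)) (diag_block_mat (map f1 xs)) (diag_block_mat (map f2 xs))"
  using assms
proof (induction xs)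
  case Nil
  show ?case by (simp only: list.map mat_comb_refl)
next
  case (Cons x xs)
  then show ?case
    unfolding list.map by (intro mat_comb_diag_block_mat_Cons) simp_all
qed

lemma smult_mat_mult_vec:
  "A \<in> carrier_mat nr nc \<Longrightarrow> v \<in> carrier_vec nc \<Longrightarrow> (k \<cdot>\<^sub>m A) *\<^sub>v v = k \<cdot>\<^sub>v (A *\<^sub>v (v :: 'a :: comm_ring vec))"
  by (intro eq_vecI) (auto simp: scalar_prod_def sum_distrib_left ac_simps)

lemma transpose_smult_mat: "transpose_mat (k \<cdot>\<^sub>m A) = k \<cdot>\<^sub>m transpose_mat A"
  by (intro eq_matI) auto

lemma neg_def_mat_convex_comb:
  fixes M1 M2 :: "real mat"
  assumes "neg_def_mat M1" "neg_def_mat M2" "M1 \<in> carrier_mat n n" "M2 \<in> carrier_mat n n"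
    and "0 \<le> g" "g \<le> 1"
  shows "neg_def_mat (g \<cdot>\<^sub>m M1 + (1 - g) \<cdot>\<^sub>m M2)"
proof -
  let ?M = "g \<cdot>\<^sub>m M1 + (1 - g) \<cdot>\<^sub>m M2"
  have quadratic_form: "v \<bullet> (?M *\<^sub>v v) = g * (v \<bullet> (M1 *\<^sub>v v)) + (1 - g) * (v \<bullet> (M2 *\<^sub>v v))"
    if "v \<in> carrier_vec n" for v
    using that assms(3,4)
    by (simp add: add_mult_distrib_mat_vec[of _ n n] smult_mat_mult_vec scalar_prod_add_distrib[of _ n])
  have "transpose_mat ?M = ?M"
    using assms unfolding neg_def_mat_def by (simp add: transpose_add[of _ n n] transpose_smult_mat)
  moreover have "v \<bullet> (?M *\<^sub>v v) < 0" if "v \<in> carrier_vec n" "v \<noteq> 0\<^sub>v n" for v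
  proof -
    have "v \<bullet> (M1 *\<^sub>v v) < 0" "v \<bullet> (M2 *\<^sub>v v) < 0"
      using assms(1-4) that unfolding neg_def_mat_def by auto
    with assms(5,6) show ?thesis
      unfolding quadratic_form[OF that(1)]
      by (smt (verit) mult_nonneg_nonpos mult_pos_neg)
  qed
  ultimately show ?thesis
    using assms(3,4) unfolding neg_def_mat_def by auto
qed

lemma neg_def_mat_comb:
  assumes "mat_comb g M M1 M2" "neg_def_mat M1" "neg_def_mat M2" "0 \<le> g" "g \<le> 1"
  shows "neg_def_mat M"
proof -
  have M1: "M1 \<in> carrier_mat (dim_row M) (dim_col M)" and M2: "M2 \<in> carrier_mat (dim_row M) (dim_col M)"
    and M: "M = g \<cdot>\<^sub>m M1 + (1 - g) \<cdot>\<^sub>m M2"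
    using assms(1) unfolding mat_comb_iff by blast+
  have "dim_col M = dim_row M"
    using assms(2) M1 unfolding neg_def_mat_def by auto
  then show ?thesis
    using neg_def_mat_convex_comb[OF assms(2,3) _ _ assms(4,5)] M1 M2 M by metis
qed

text \<open>No positivity is needed here (nor in the theorem): \<open>1 / (1 / x) = x\<close> holds for all reals,
  including \<open>x = 0\<close>.\<close>

lemma inverse_hcomb: "1 / hcomb g a b = g * (1 / a) + (1 - g) * (1 / b)"
  unfolding hcomb_def by simp

lemma inverse_mult_comb:
  fixes x x1 x2 c :: real
  assumes "1 / x = g * (1 / x1) + (1 - g) * (1 / x2)"
  shows "1 / (c * x) = g * (1 / (c * x1)) + (1 - g) * (1 / (c * x2))"
proof -
  have scale: "1 / (c * y) = 1 / c * (1 / y)" for y :: real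
    by simp
  show ?thesis
    unfolding scale assms by (simp add: algebra_simps)
qed

lemma dim_row_vstack: "dim_row (vstack n Ms) = sum_list (map dim_row Ms)"
  by (induction Ms) (auto simp: vstack_def append_rows_def)

lemma dim_col_vstack_Cons: "dim_col (vstack n (M # Ms)) = dim_col M"
  by (simp add: vstack_def append_rows_def)

lemma mat_comb_Zmat:
  fixes \<nu> \<mu> :: "nat \<Rightarrow> nat \<Rightarrow> real"
  assumes "Arho \<in> carrier_mat n n" "B1 \<in> carrier_mat n p" "B2 \<in> carrier_mat n m"
    and "Y \<in> carrier_mat n n" "mat_comb g Y Y1 Y2"
    and inverse_\<nu>: "\<And>a b. 1 / \<nu> a b = g * (1 / \<nu>1 a b) + (1 - g) * (1 / \<nu>2 a b)"
    and inverse_\<mu>: "\<And>a b. 1 / \<mu> a b = g * (1 / \<mu>1 a b) + (1 - g) * (1 / \<mu>2 a b)"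
  shows "mat_comb g (Zmat E N Arho B1 B2 R \<nu> \<mu> Y i)
           (Zmat E N Arho B1 B2 R \<nu>1 \<mu>1 Y1 i) (Zmat E N Arho B1 B2 R \<nu>2 \<mu>2 Y2 i)"
proof -
  define coeff where "coeff \<nu>' \<mu>' =
    (\<Sum>j\<in>Sphi E N i. 1 / \<nu>' i j + 1 / \<mu>' i j) + (if dd E i then 1 / \<nu>' i 0 else 0)
      + (\<Sum>k\<in>{k \<in> {1..N}. ddbar E k}. 1 / \<mu>' 0 k)" for \<nu>' \<mu>' :: "nat \<Rightarrow> nat \<Rightarrow> real"
  have "(\<Sum>j\<in>Sphi E N i. 1 / \<nu> i j + 1 / \<mu> i j) =
      g * (\<Sum>j\<in>Sphi E N i. 1 / \<nu>1 i j + 1 / \<mu>1 i j) + (1 - g) * (\<Sum>j\<in>Sphi E N i. 1 / \<nu>2 i j + 1 / \<mu>2 i j)"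
    "(\<Sum>k\<in>{k \<in> {1..N}. ddbar E k}. 1 / \<mu> 0 k) =
      g * (\<Sum>k\<in>{k \<in> {1..N}. ddbar E k}. 1 / \<mu>1 0 k) + (1 - g) * (\<Sum>k\<in>{k \<in> {1..N}. ddbar E k}. 1 / \<mu>2 0 k)"
    "(if dd E i then 1 / \<nu> i 0 else 0) =
      g * (if dd E i then 1 / \<nu>1 i 0 else 0) + (1 - g) * (if dd E i then 1 / \<nu>2 i 0 else 0)"
    by (simp_all add: inverse_\<nu> inverse_\<mu> sum.distrib sum_distrib_left distrib_left add_ac)
  then have "coeff \<nu> \<mu> = g * coeff \<nu>1 \<mu>1 + (1 - g) * coeff \<nu>2 \<mu>2"
    unfolding coeff_def by (simp add: algebra_simps)
  then have scaled: "mat_comb g (coeff \<nu> \<mu> \<cdot>\<^sub>m (B2 * transpose_mat B2))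
      (coeff \<nu>1 \<mu>1 \<cdot>\<^sub>m (B2 * transpose_mat B2)) (coeff \<nu>2 \<mu>2 \<cdot>\<^sub>m (B2 * transpose_mat B2))"
    by (rule mat_comb_smult_mat)
  have linear: "mat_comb g (Arho * Y + Y * transpose_mat Arho) (Arho * Y1 + Y1 * transpose_mat Arho)
      (Arho * Y2 + Y2 * transpose_mat Arho)"
    using assms(1,4) by (intro mat_comb_add mat_comb_mult_left[OF assms(5)] mat_comb_mult_right[OF assms(5)]) auto
  show ?thesis
    unfolding Zmat_def coeff_def[symmetric]
    by (rule mat_comb_add[OF mat_comb_minus[OF linear mat_comb_refl] scaled]) (use assms(1-4) in auto)
qed

lemma mat_comb_Upsilon:
  fixes \<nu> \<mu> :: "nat \<Rightarrow> nat \<Rightarrow> real"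
  assumes "Arho \<in> carrier_mat n n" "B1 \<in> carrier_mat n p" "B2 \<in> carrier_mat n m"
    and "Qh \<in> carrier_mat n n"
    and "Y \<in> carrier_mat n n" "mat_comb g Y Y1 Y2"
    and inverse_\<nu>: "\<And>a b. 1 / \<nu> a b = g * (1 / \<nu>1 a b) + (1 - g) * (1 / \<nu>2 a b)"
    and inverse_\<mu>: "\<And>a b. 1 / \<mu> a b = g * (1 / \<mu>1 a b) + (1 - g) * (1 / \<mu>2 a b)"
  shows "mat_comb g (Upsilon E N n Arho B1 B2 R Qh C Y \<nu> \<mu> i)
           (Upsilon E N n Arho B1 B2 R Qh C Y1 \<nu>1 \<mu>1 i) (Upsilon E N n Arho B1 B2 R Qh C Y2 \<nu>2 \<mu>2 i)"
proof -
  define K where "K = vstack n ([Qh, Chat E N n C i, Cbar E N n C i]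
    @ (if dd E i then [C i 0] else []) @ (if ddbar E i then [C 0 i] else []))"
  define D where "D \<nu>' \<mu>' = diag_block_mat ([- 1\<^sub>m (dim_row Qh), - Phi E N C \<nu>' i, - Omega E N C \<mu>' i]
    @ (if dd E i then [- ((1 / \<nu>' i 0) \<cdot>\<^sub>m 1\<^sub>m (dim_row (C i 0)))] else [])
    @ (if ddbar E i then [- ((1 / (real N * \<mu>' 0 i)) \<cdot>\<^sub>m 1\<^sub>m (dim_row (C 0 i)))] else []))"
    for \<nu>' \<mu>' :: "nat \<Rightarrow> nat \<Rightarrow> real"
  have "dim_col K = n"
    unfolding K_def append.simps dim_col_vstack_Cons using assms(4) by blast
  then have K: "K \<in> carrier_mat (dim_row K) n"
    by blast
  have D: "dim_row (D \<nu>' \<mu>') = dim_row K" "dim_col (D \<nu>' \<mu>') = dim_row K" for \<nu>' \<mu>'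
    using assms(4) by (simp_all add: K_def D_def dim_row_vstack dim_diag_block_mat
        Chat_def Cbar_def Phi_def Omega_def o_def)
  have Dc: "mat_comb g (D \<nu> \<mu>) (D \<nu>1 \<mu>1) (D \<nu>2 \<mu>2)"
  proof -
    have "mat_comb g (- Phi E N C \<nu> i) (- Phi E N C \<nu>1 i) (- Phi E N C \<nu>2 i)"
      "mat_comb g (- Omega E N C \<mu> i) (- Omega E N C \<mu>1 i) (- Omega E N C \<mu>2 i)"
      unfolding Phi_def Omega_def
      by (intro mat_comb_uminus mat_comb_diag_block_mat_map ballI mat_comb_smult_mat inverse_\<nu> inverse_\<mu>)+
    moreover have "mat_comb g (- ((1 / \<nu> i 0) \<cdot>\<^sub>m M)) (- ((1 / \<nu>1 i 0) \<cdot>\<^sub>m M)) (- ((1 / \<nu>2 i 0) \<cdot>\<^sub>m M))"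
      for M by (intro mat_comb_uminus mat_comb_smult_mat inverse_\<nu>)
    moreover have "mat_comb g (- ((1 / (real N * \<mu> 0 i)) \<cdot>\<^sub>m M)) (- ((1 / (real N * \<mu>1 0 i)) \<cdot>\<^sub>m M))
         (- ((1 / (real N * \<mu>2 0 i)) \<cdot>\<^sub>m M))" for M
      by (intro mat_comb_uminus mat_comb_smult_mat inverse_mult_comb inverse_\<mu>)
    ultimately show ?thesis
      unfolding D_def append.simps
      by (cases "dd E i"; cases "ddbar E i")
        (simp_all only: if_True if_False append.simps,
         (intro mat_comb_diag_block_mat_Cons mat_comb_refl | assumption)+)
  qed
  have Z: "Zmat E N Arho B1 B2 R \<nu> \<mu> Y i \<in> carrier_mat n n"
    unfolding Zmat_def using assms(1-3,5) by simp
  show ?thesis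
    unfolding Upsilon_def Let_def K_def[symmetric] D_def[symmetric]
  proof (rule mat_comb_four_block_mat[OF mat_comb_Zmat[OF assms(1-3,5,6) inverse_\<nu> inverse_\<mu>]
        mat_comb_mult_right[OF assms(6)] mat_comb_mult_left[OF assms(6)] Dc])
    show "transpose_mat K \<in> carrier_mat (dim_col Y) (dim_row K)"
      using carrier_matD(2)[OF K] carrier_matD(2)[OF assms(5)] by (intro carrier_matI) (simp_all only: index_transpose_mat)
    show "K \<in> carrier_mat (dim_row K) (dim_row Y)"
      using carrier_matD(2)[OF K] carrier_matD(1)[OF assms(5)] by (intro carrier_matI) (simp_all only:)
  qed (use carrier_matD[OF K] carrier_matD[OF Z] carrier_matD[OF assms(5)] in \<open>simp_all only: D index_mult_mat index_transpose_mat\<close>)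
qed

theorem lemma1:
  fixes N n p m :: nat
    and E :: "(nat \<times> nat) set"
    and \<rho>min \<rho>max \<rho> :: real
    and A :: "real \<Rightarrow> real mat"
    and B1 B2 R Qbar Qh :: "real mat"
    and C :: "nat \<Rightarrow> nat \<Rightarrow> real mat"
    and q :: "nat \<Rightarrow> nat \<Rightarrow> nat"
    and Y1 Y2 :: "real mat"
    and \<nu>1 \<nu>2 \<mu>1 \<mu>2 :: "nat \<Rightarrow> nat \<Rightarrow> real"
    and \<gamma> :: real
  assumes N: "N \<ge> 1"
    and E: "E \<subseteq> {0..N} \<times> {0..N}"
    and \<Gamma>: "\<rho>min \<le> \<rho>max"
    and A_dim: "\<forall>r \<in> {\<rho>min..\<rho>max}. A r \<in> carrier_mat n n"
    and A_cont: "\<forall>a < n. \<forall>b < n. continuous_on {\<rho>min..\<rho>max} (\<lambda>r. A r $$ (a, b))"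
    and B1: "B1 \<in> carrier_mat n p"
    and B2: "B2 \<in> carrier_mat n m"
    and C_dim: "\<forall>(j, i) \<in> E. C i j \<in> carrier_mat (q i j) n"
    and R: "R \<in> carrier_mat p p" "pos_def_mat R"
    and Qbar: "Qbar \<in> carrier_mat n n" "pos_def_mat Qbar"
    and Qh: "Qh \<in> carrier_mat n n" "pos_def_mat Qh" "Qh * Qh = Qbar"
    and \<rho>: "\<rho> \<in> {\<rho>min..\<rho>max}"
    and Y1: "Y1 \<in> carrier_mat n n" "pos_def_mat Y1"
    and Y2: "Y2 \<in> carrier_mat n n" "pos_def_mat Y2"
    and pos1: "\<forall>i \<in> {1..N}. (\<forall>j \<in> Sphi E N i. \<nu>1 i j > 0 \<and> \<mu>1 i j > 0)
                 \<and> (dd E i \<longrightarrow> \<nu>1 i 0 > 0) \<and> (ddbar E i \<longrightarrow> \<mu>1 0 i > 0)"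
    and pos2: "\<forall>i \<in> {1..N}. (\<forall>j \<in> Sphi E N i. \<nu>2 i j > 0 \<and> \<mu>2 i j > 0)
                 \<and> (dd E i \<longrightarrow> \<nu>2 i 0 > 0) \<and> (ddbar E i \<longrightarrow> \<mu>2 0 i > 0)"
    and LMI1: "\<forall>i \<in> {1..N}. neg_def_mat (Upsilon E N n (A \<rho>) B1 B2 R Qh C Y1 \<nu>1 \<mu>1 i)"
    and LMI2: "\<forall>i \<in> {1..N}. neg_def_mat (Upsilon E N n (A \<rho>) B1 B2 R Qh C Y2 \<nu>2 \<mu>2 i)"
    and \<gamma>: "\<gamma> \<in> {0..1}"
  shows "\<forall>i \<in> {1..N}. neg_def_mat
           (Upsilon E N n (A \<rho>) B1 B2 R Qh C (\<gamma> \<cdot>\<^sub>m Y1 + (1 - \<gamma>) \<cdot>\<^sub>m Y2)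
              (\<lambda>a b. hcomb \<gamma> (\<nu>1 a b) (\<nu>2 a b)) (\<lambda>a b. hcomb \<gamma> (\<mu>1 a b) (\<mu>2 a b)) i)"
proof
  fix i assume i: "i \<in> {1..N}"
  have A\<rho>: "A \<rho> \<in> carrier_mat n n"
    using A_dim \<rho> by blast
  have Y: "\<gamma> \<cdot>\<^sub>m Y1 + (1 - \<gamma>) \<cdot>\<^sub>m Y2 \<in> carrier_mat n n"
    "mat_comb \<gamma> (\<gamma> \<cdot>\<^sub>m Y1 + (1 - \<gamma>) \<cdot>\<^sub>m Y2) Y1 Y2"
    using Y1(1) Y2(1) by (auto simp: mat_comb_iff)
  have "mat_comb \<gamma>
      (Upsilon E N n (A \<rho>) B1 B2 R Qh C (\<gamma> \<cdot>\<^sub>m Y1 + (1 - \<gamma>) \<cdot>\<^sub>m Y2)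
         (\<lambda>a b. hcomb \<gamma> (\<nu>1 a b) (\<nu>2 a b)) (\<lambda>a b. hcomb \<gamma> (\<mu>1 a b) (\<mu>2 a b)) i)
      (Upsilon E N n (A \<rho>) B1 B2 R Qh C Y1 \<nu>1 \<mu>1 i) (Upsilon E N n (A \<rho>) B1 B2 R Qh C Y2 \<nu>2 \<mu>2 i)"
    by (rule mat_comb_Upsilon[OF A\<rho> B1 B2 Qh(1) Y inverse_hcomb inverse_hcomb])
  then show "neg_def_mat
      (Upsilon E N n (A \<rho>) B1 B2 R Qh C (\<gamma> \<cdot>\<^sub>m Y1 + (1 - \<gamma>) \<cdot>\<^sub>m Y2)
         (\<lambda>a b. hcomb \<gamma> (\<nu>1 a b) (\<nu>2 a b)) (\<lambda>a b. hcomb \<gamma> (\<mu>1 a b) (\<mu>2 a b)) i)"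
    by (rule neg_def_mat_comb) (use LMI1 LMI2 i \<gamma> in auto)
qed

end
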